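(* Let $\Sigma$ be a finite alphabet, $z_1,\dots,z_n\in\Sigma$, and $L_z=\Sigma^*z_1\Sigma^*z_2\Sigma^*\cdots\Sigma^*z_n\Sigma^*$. There exists an end-decisive MM-QFA that accepts $L_z$ with bounded positive one-sided error.
   Context: A measure-many quantum finite automaton (MM-QFA) over $\Sigma$ is a tuple $(Q,\Sigma,\{U_\sigma\}_{\sigma\in\Sigma\cup\{\$\}},q_0,Q_{acc},Q_{rej})$ with $Q$ finite indexing an orthonormal basis of $\mathbb{C}^Q$, end-marker $\$\notin\Sigma$, unitary $U_\sigma$, initial state $q_0$, and $Q$ partitioned into $Q_{acc},Q_{rej},Q_{non}$ with orthogonal projections $P_{acc},P_{rej},P_{non}$ onto the corresponding spans. On input $x\in\Sigma^*$ it processes the symbols of $x\$$ maintaining $(\psi,p_{acc},p_{rej})$, initially $(|q_0\rangle,0,0)$; on reading $\sigma$: $\psi'=U_\sigma\psi$, $p_{acc}\mathrel{+}=\|P_{acc}\psi'\|^2$, $p_{rej}\mathrel{+}=\|P_{rej}\psi'\|^2$, $\psi\leftarrow P_{non}\psi'$; the acceptance probability $p_M(x)$ is the final $p_{acc}$. The MM-QFA is end-decisive if, for every input, $P_{acc}\psi'=0$ after reading every symbol other than the end-marker (i.e. it can be observed in an accepting state only when $\$$ is read). It accepts $L$ with bounded positive one-sided error if there is $c>0$ with $p_M(x)>c$ for all $x\in L$ and $p_M(x)=0$ for all $x\notin L$. *)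

theory Defs
  imports Complex_Main
begin

text \<open>The state set Q is {0..<qdim M}
  (indexing the standard orthonormal basis of C^Q); vectors are functions
  nat => complex (only indices < qdim M matter); the input symbols are
  Some s for s in the alphabet, and the end-marker is None.\<close>

record 'a mmqfa =
  qdim :: nat
  trans :: "'a option \<Rightarrow> nat \<Rightarrow> nat \<Rightarrow> complex"
  qinit :: nat
  qacc :: "nat set"
  qrej :: "nat set"

definition unitary_on :: "nat \<Rightarrow> (nat \<Rightarrow> nat \<Rightarrow> complex) \<Rightarrow> bool" where
  "unitary_on m U \<longleftrightarrow>
     (\<forall>i<m. \<forall>j<m. (\<Sum>k<m. cnj (U k i) * U k j) = (if i = j then 1 else 0))"

definition is_mmqfa :: "'a set \<Rightarrow> 'a mmqfa \<Rightarrow> bool" where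
  "is_mmqfa Sig M \<longleftrightarrow>
     qinit M < qdim M \<and> qacc M \<subseteq> {..<qdim M} \<and> qrej M \<subseteq> {..<qdim M} \<and>
     qacc M \<inter> qrej M = {} \<and>
     (\<forall>s \<in> Some ` Sig \<union> {None}. unitary_on (qdim M) (trans M s))"

definition apply_op :: "'a mmqfa \<Rightarrow> 'a option \<Rightarrow> (nat \<Rightarrow> complex) \<Rightarrow> (nat \<Rightarrow> complex)" where
  "apply_op M s psi = (\<lambda>i. if i < qdim M then (\<Sum>j<qdim M. trans M s i j * psi j) else 0)"

definition sqnorm_on :: "'a mmqfa \<Rightarrow> nat set \<Rightarrow> (nat \<Rightarrow> complex) \<Rightarrow> real" where
  "sqnorm_on M S psi = (\<Sum>i \<in> S \<inter> {..<qdim M}. (cmod (psi i))\<^sup>2)"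

definition proj_non :: "'a mmqfa \<Rightarrow> (nat \<Rightarrow> complex) \<Rightarrow> (nat \<Rightarrow> complex)" where
  "proj_non M psi = (\<lambda>i. if i < qdim M \<and> i \<notin> qacc M \<and> i \<notin> qrej M then psi i else 0)"

definition init_state :: "'a mmqfa \<Rightarrow> (nat \<Rightarrow> complex) \<times> real \<times> real" where
  "init_state M = ((\<lambda>i. if i = qinit M then 1 else 0), 0, 0)"

definition step :: "'a mmqfa \<Rightarrow> 'a option \<Rightarrow> (nat \<Rightarrow> complex) \<times> real \<times> real
                    \<Rightarrow> (nat \<Rightarrow> complex) \<times> real \<times> real" where
  "step M s st = (case st of (psi, pa, pr) \<Rightarrow>
      (let psi' = apply_op M s psi
       in (proj_non M psi', pa + sqnorm_on M (qacc M) psi', pr + sqnorm_on M (qrej M) psi')))"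

definition run :: "'a mmqfa \<Rightarrow> 'a option list \<Rightarrow> (nat \<Rightarrow> complex) \<times> real \<times> real" where
  "run M ws = fold (step M) ws (init_state M)"

definition acc_prob :: "'a mmqfa \<Rightarrow> 'a list \<Rightarrow> real" where
  "acc_prob M x = fst (snd (run M (map Some x @ [None])))"

definition end_decisive :: "'a set \<Rightarrow> 'a mmqfa \<Rightarrow> bool" where
  "end_decisive Sig M \<longleftrightarrow>
     (\<forall>x \<in> lists Sig. \<forall>k < length x.
        \<forall>i \<in> qacc M. apply_op M (Some (x ! k)) (fst (run M (map Some (take k x)))) i = 0)"

definition accepts_bounded_pos_one_sided :: "'a set \<Rightarrow> 'a mmqfa \<Rightarrow> 'a list set \<Rightarrow> bool" where
  "accepts_bounded_pos_one_sided Sig M L \<longleftrightarrow>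
     (\<exists>c::real. c > 0 \<and>
        (\<forall>x \<in> lists Sig. (x \<in> L \<longrightarrow> acc_prob M x > c) \<and> (x \<notin> L \<longrightarrow> acc_prob M x = 0)))"

fun subword_lang :: "'a set \<Rightarrow> 'a list \<Rightarrow> 'a list set" where
  "subword_lang Sig [] = lists Sig"
| "subword_lang Sig (z # zs) = {u @ [z] @ v | u v. u \<in> lists Sig \<and> v \<in> subword_lang Sig zs}"

end

(* Let n = length z. The automaton acts on C^(2n+2): basis states 0..n are non-halting and
   record how much of z has been matched, states n+1..2n reject and state 2n+1 accepts.
   Reading a applies, for k = n-1 down to 0 with z!k = a, the Householder reflection along
   (e_k - e_(k+1))/2 - e_(n+1+k)/sqrt 2. It touches only the coordinates k, k+1 and n+1+k,
   so coordinate n+1+k is still zero when its reflection comes, and then the reflection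
   replaces the amplitudes at k and k+1 by their mean and sends the rest to the reject state
   n+1+k, which the measurement discards. The surviving real amplitude vector therefore stays
   nonincreasing, vanishes beyond the length p of the greedy match of z in the input read so
   far, and keeps at least 2^-p at p: because the sweep runs downwards, reading z!p moves half
   of the amplitude at p to p+1 and no further, and any other symbol can only raise the
   amplitude at p. The end-marker swaps states n and 2n+1, so the acceptance probability is
   the squared amplitude at n, which is at least 4^-n if z is a subsequence of the input and
   0 otherwise; the accepting state is never touched before the end-marker. *)

theory Submission
  imports Defs "HOL-Library.Sublist"
begin

section \<open>Householder reflections\<close>

definition basis_vec :: "nat \<Rightarrow> nat \<Rightarrow> complex" where
  "basis_vec j = (\<lambda>i. if i = j then 1 else 0)"

definition cinner :: "nat \<Rightarrow> (nat \<Rightarrow> complex) \<Rightarrow> (nat \<Rightarrow> complex) \<Rightarrow> complex" where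
  "cinner m u v = (\<Sum>k<m. cnj (u k) * v k)"

definition matrix_op :: "nat \<Rightarrow> ((nat \<Rightarrow> complex) \<Rightarrow> (nat \<Rightarrow> complex)) \<Rightarrow> bool" where
  "matrix_op m A \<longleftrightarrow> (\<forall>\<psi> i. i < m \<longrightarrow> A \<psi> i = (\<Sum>j<m. A (basis_vec j) i * \<psi> j))"

definition householder :: "nat \<Rightarrow> (nat \<Rightarrow> real) \<Rightarrow> (nat \<Rightarrow> complex) \<Rightarrow> nat \<Rightarrow> complex" where
  "householder m w \<psi> = (\<lambda>i. \<psi> i - 2 * (\<Sum>k<m. of_real (w k) * \<psi> k) * of_real (w i))"

lemma sum_lessThan_support:
  fixes m :: nat
  assumes "T \<subseteq> {..<m}" and "\<And>t. t < m \<Longrightarrow> t \<notin> T \<Longrightarrow> f t = 0"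
  shows "(\<Sum>t<m. f t) = sum f T"
  using assms by (intro sum.mono_neutral_right) auto

lemma sum_basis_vec_left:
  assumes "i < m" shows "(\<Sum>j<m. basis_vec j i * f j) = f i"
proof -
  have "(\<Sum>j<m. basis_vec j i * f j) = (\<Sum>j<m. if j = i then f j else 0)"
    by (rule sum.cong) (auto simp: basis_vec_def)
  with assms show ?thesis by simp
qed

lemma sum_basis_vec_right:
  assumes "i < m" shows "(\<Sum>j<m. f j * basis_vec i j) = f i"
proof -
  have "(\<Sum>j<m. f j * basis_vec i j) = (\<Sum>j<m. if j = i then f j else 0)"
    by (rule sum.cong) (auto simp: basis_vec_def)
  with assms show ?thesis by simp
qed

lemma cinner_householder:
  assumes "(\<Sum>k<m. (w k)\<^sup>2) = 1"
  shows "cinner m (householder m w u) (householder m w v) = cinner m u v"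
proof -
  define a where "a = (\<Sum>k<m. of_real (w k) * u k)"
  define b where "b = (\<Sum>k<m. of_real (w k) * v k)"
  have cnj_a: "(\<Sum>k<m. cnj (u k) * of_real (w k)) = cnj a"
    unfolding a_def by (simp add: mult.commute)
  have w_unit: "(\<Sum>k<m. of_real (w k) * of_real (w k) :: complex) = 1"
    using arg_cong[OF assms, of complex_of_real] by (simp add: power2_eq_square)
  have "cinner m (householder m w u) (householder m w v) =
      (\<Sum>k<m. (cnj (u k) - 2 * cnj a * of_real (w k)) * (v k - 2 * b * of_real (w k)))"
    unfolding cinner_def householder_def a_def b_def by simp
  also have "\<dots> = cinner m u v - 2 * b * (\<Sum>k<m. cnj (u k) * of_real (w k))
      - 2 * cnj a * (\<Sum>k<m. of_real (w k) * v k)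
      + 4 * cnj a * b * (\<Sum>k<m. of_real (w k) * of_real (w k))"
    by (simp add: cinner_def algebra_simps sum.distrib sum_subtractf sum_distrib_left)
  also have "\<dots> = cinner m u v"
    using cnj_a w_unit b_def by simp
  finally show ?thesis .
qed

lemma householder_basis_vec:
  "j < m \<Longrightarrow> householder m w (basis_vec j) i = basis_vec j i - 2 * of_real (w j) * of_real (w i)"
  by (simp add: householder_def sum_basis_vec_right)

lemma matrix_op_householder: "matrix_op m (householder m w)"
  unfolding matrix_op_def
proof (intro allI impI)
  fix \<psi> i assume "i < m"
  have "(\<Sum>j<m. householder m w (basis_vec j) i * \<psi> j)
      = (\<Sum>j<m. basis_vec j i * \<psi> j - 2 * of_real (w i) * (of_real (w j) * \<psi> j))"
    by (rule sum.cong) (auto simp: householder_basis_vec algebra_simps)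
  also have "\<dots> = \<psi> i - 2 * of_real (w i) * (\<Sum>j<m. of_real (w j) * \<psi> j)"
    using \<open>i < m\<close> by (simp add: sum_subtractf sum_distrib_left sum_basis_vec_left)
  finally show "householder m w \<psi> i = (\<Sum>j<m. householder m w (basis_vec j) i * \<psi> j)"
    by (simp add: householder_def algebra_simps)
qed

lemma matrix_op_id: "matrix_op m id"
  by (simp add: matrix_op_def sum_basis_vec_left)

lemma matrix_op_comp:
  assumes A: "matrix_op m A" and B: "matrix_op m B"
  shows "matrix_op m (A \<circ> B)"
  unfolding matrix_op_def
proof (intro allI impI)
  fix \<psi> i assume i: "i < m"
  have "(A \<circ> B) \<psi> i = (\<Sum>j<m. A (basis_vec j) i * (\<Sum>l<m. B (basis_vec l) j * \<psi> l))"
    using A B i unfolding matrix_op_def by simp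
  also have "\<dots> = (\<Sum>l<m. (\<Sum>j<m. A (basis_vec j) i * B (basis_vec l) j) * \<psi> l)"
    by (simp add: sum_distrib_left sum_distrib_right mult.assoc) (rule sum.swap)
  also have "\<dots> = (\<Sum>l<m. (A \<circ> B) (basis_vec l) i * \<psi> l)"
    using A i unfolding matrix_op_def by simp
  finally show "(A \<circ> B) \<psi> i = (\<Sum>j<m. (A \<circ> B) (basis_vec j) i * \<psi> j)" .
qed

lemma unitary_on_if_cinner_preserving:
  assumes "\<And>u v. cinner m (A u) (A v) = cinner m u v"
  shows "unitary_on m (\<lambda>i j. A (basis_vec j) i)"
  unfolding unitary_on_def
proof (intro allI impI)
  fix i j assume "i < m" "j < m"
  have "(\<Sum>k<m. cnj (A (basis_vec i) k) * A (basis_vec j) k) = cinner m (basis_vec i) (basis_vec j)"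
    using assms unfolding cinner_def by simp
  also have "\<dots> = (if i = j then 1 else 0)"
    using \<open>j < m\<close> by (simp add: cinner_def sum_basis_vec_right) (simp add: basis_vec_def)
  finally show "(\<Sum>k<m. cnj (A (basis_vec i) k) * A (basis_vec j) k) = (if i = j then 1 else 0)" .
qed

lemma householder_off_axis: "w t = 0 \<Longrightarrow> householder m w \<psi> t = \<psi> t"
  by (simp add: householder_def)

section \<open>Sweeps of adjacent averages\<close>

fun sweep :: "(nat \<Rightarrow> 'b \<Rightarrow> 'b) \<Rightarrow> 'a list \<Rightarrow> 'a \<Rightarrow> nat \<Rightarrow> 'b \<Rightarrow> 'b" where
  "sweep f z a 0 = id"
| "sweep f z a (Suc k) = sweep f z a k \<circ> (if z ! k = a then f k else id)"

lemma sweep_closed: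
  assumes "Q id" and "\<And>g h. Q g \<Longrightarrow> Q h \<Longrightarrow> Q (g \<circ> h)" and "\<And>k. k < K \<Longrightarrow> Q (f k)"
  shows "Q (sweep f z a K)"
  using assms(3) by (induction K) (simp_all add: assms(1,2))

lemma sweep_invariant:
  assumes "P x" and "\<And>k y. k < K \<Longrightarrow> P y \<Longrightarrow> P (f k y)"
  shows "P (sweep f z a K x)"
  using assms by (induction K arbitrary: x) auto

lemma sweep_commute:
  assumes "\<And>k x. k < K \<Longrightarrow> g (f k x) = f' k (g x)"
  shows "g (sweep f z a K x) = sweep f' z a K (g x)"
  using assms by (induction K arbitrary: x) simp_all

definition avg_adjacent :: "nat \<Rightarrow> (nat \<Rightarrow> 'b::field) \<Rightarrow> nat \<Rightarrow> 'b" where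
  "avg_adjacent k c = c(k := (c k + c (Suc k)) / 2, Suc k := (c k + c (Suc k)) / 2)"

lemma antimono_avg_adjacent:
  fixes c :: "nat \<Rightarrow> real"
  assumes "antimono c"
  shows "antimono (avg_adjacent k c)"
proof
  fix s t :: nat assume "s \<le> t"
  have "c (Suc k) \<le> c k" using assms by (simp add: antimonoD)
  then show "avg_adjacent k c t \<le> avg_adjacent k c s"
    using \<open>s \<le> t\<close> antimonoD[OF assms, of s t] antimonoD[OF assms, of s k]
      antimonoD[OF assms, of "Suc k" t]
    by (auto simp: avg_adjacent_def)
qed

lemma antimono_sweep_avg: "antimono c \<Longrightarrow> antimono (sweep avg_adjacent z a K (c :: nat \<Rightarrow> real))"
  by (rule sweep_invariant[where P = "\<lambda>c. antimono c"]) (simp_all add: antimono_avg_adjacent)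

lemma sweep_avg_above: "K < t \<Longrightarrow> sweep avg_adjacent z a K c t = c t"
  by (rule sweep_invariant[where P = "\<lambda>y. y t = c t"]) (auto simp: avg_adjacent_def)

lemma sweep_avg_last:
  fixes c :: "nat \<Rightarrow> real"
  assumes "antimono c"
  shows "c K \<le> sweep avg_adjacent z a K c K"
proof (cases K)
  case (Suc j)
  have "c (Suc j) \<le> c j" using assms by (simp add: antimonoD)
  then show ?thesis using Suc by (simp add: sweep_avg_above avg_adjacent_def)
qed simp

lemma sweep_avg_vanishing:
  assumes "\<forall>t>p. c t = 0" and "p < K"
  shows "sweep avg_adjacent z a K c = sweep avg_adjacent z a (Suc p) c"
  using Suc_leI[OF assms(2)]
proof (induction K rule: dec_induct)
  case (step k)
  have "avg_adjacent k c = c" using assms(1) step.hyps by (auto simp: avg_adjacent_def fun_eq_iff)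
  with step.IH show ?case by simp
qed simp

lemma sweep_avg_cong:
  fixes f g :: "nat \<Rightarrow> 'b::field"
  assumes "K \<le> n" and "\<And>t. t \<le> n \<Longrightarrow> f t = g t" and "t \<le> n"
  shows "sweep avg_adjacent z a K f t = sweep avg_adjacent z a K g t"
proof -
  define trunc :: "(nat \<Rightarrow> 'b) \<Rightarrow> nat \<Rightarrow> 'b" where "trunc h = (\<lambda>t. if t \<le> n then h t else 0)" for h
  have "trunc (sweep avg_adjacent z a K h) = sweep avg_adjacent z a K (trunc h)" for h
    by (rule sweep_commute[where g = trunc])
      (use assms(1) in \<open>auto simp: trunc_def avg_adjacent_def fun_eq_iff\<close>)
  moreover have "trunc f = trunc g" using assms(2) by (simp add: trunc_def fun_eq_iff)
  ultimately have "trunc (sweep avg_adjacent z a K f) = trunc (sweep avg_adjacent z a K g)" by simp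
  from fun_cong[OF this, of t] assms(3) show ?thesis by (simp add: trunc_def)
qed

section \<open>Greedy subsequence matching\<close>

definition match_step :: "'a list \<Rightarrow> 'a \<Rightarrow> nat \<Rightarrow> nat" where
  "match_step z a p = (if p < length z \<and> z ! p = a then Suc p else p)"

lemma fold_match_step_eq_length_iff:
  "p \<le> length z \<Longrightarrow> fold (match_step z) x p = length z \<longleftrightarrow> subseq (drop p z) x"
proof (induction x arbitrary: p)
  case Nil
  then show ?case by (auto dest: list_emb_Nil2)
next
  case (Cons b x)
  show ?case
  proof (cases "p < length z")
    case True
    then have "drop p z = z ! p # drop (Suc p) z" by (simp add: Cons_nth_drop_Suc)
    with True Cons.IH[of p] Cons.IH[of "Suc p"] Cons.prems show ?thesis
      by (simp add: match_step_def)
  next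
    case False
    with Cons.IH[of p] Cons.prems show ?thesis by (simp add: match_step_def)
  qed
qed

lemma subword_lang_iff:
  "set z \<subseteq> Sig \<Longrightarrow> x \<in> subword_lang Sig z \<longleftrightarrow> x \<in> lists Sig \<and> subseq z x"
proof (induction z arbitrary: x)
  case (Cons a zs)
  then have a: "a \<in> Sig"
    and IH: "\<And>y. y \<in> subword_lang Sig zs \<longleftrightarrow> y \<in> lists Sig \<and> subseq zs y" by auto
  show ?case
  proof
    assume "x \<in> subword_lang Sig (a # zs)"
    then obtain u v where x: "x = u @ a # v" and u: "u \<in> lists Sig"
      and "v \<in> subword_lang Sig zs" by auto
    then have "v \<in> lists Sig" and "subseq zs v" using IH by auto
    with x u a show "x \<in> lists Sig \<and> subseq (a # zs) x" by (simp add: subseq_drop_many)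
  next
    assume x: "x \<in> lists Sig \<and> subseq (a # zs) x"
    then obtain u b v where xuv: "x = u @ b # v" and "a = b" and "subseq zs v"
      using list_emb_ConsD[of "(=)" a zs x] by blast
    moreover have "u \<in> lists Sig" and "v \<in> lists Sig" using x xuv by auto
    ultimately show "x \<in> subword_lang Sig (a # zs)" using IH by auto
  qed
qed simp

definition amp_step :: "'a list \<Rightarrow> 'a \<Rightarrow> (nat \<Rightarrow> real) \<Rightarrow> nat \<Rightarrow> real" where
  "amp_step z a = sweep avg_adjacent z a (length z)"

definition amp_invariant :: "nat \<Rightarrow> nat \<Rightarrow> (nat \<Rightarrow> real) \<Rightarrow> bool" where
  "amp_invariant n p c \<longleftrightarrow> p \<le> n \<and> antimono c \<and> (\<forall>t>p. c t = 0) \<and> (1/2) ^ p \<le> c p"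

lemma amp_step_support: "\<forall>t>length z. c t = 0 \<Longrightarrow> \<forall>t>length z. amp_step z a c t = 0"
  by (simp add: amp_step_def sweep_avg_above)

lemma amp_step_eq_sweep:
  assumes "\<forall>t>p. c t = 0" and "p \<le> length z"
  shows "amp_step z a c =
    sweep avg_adjacent z a p (if p < length z \<and> z ! p = a then avg_adjacent p c else c)"
proof (cases "p < length z")
  case True
  have "amp_step z a c = sweep avg_adjacent z a (Suc p) c"
    unfolding amp_step_def by (rule sweep_avg_vanishing[OF assms(1) True])
  with True show ?thesis by (cases "z ! p = a") simp_all
next
  case False
  with assms(2) show ?thesis by (simp add: amp_step_def)
qed

lemma amp_invariant_sweep_avg:
  assumes "amp_invariant n q c" and "p \<le> q"
  shows "amp_invariant n q (sweep avg_adjacent z a p c)"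
proof -
  have "(1/2) ^ q \<le> sweep avg_adjacent z a p c q"
  proof (cases "p = q")
    case True
    have "c q \<le> sweep avg_adjacent z a p c q"
      using assms(1) sweep_avg_last[of c q z a] True by (simp add: amp_invariant_def)
    moreover have "(1/2) ^ q \<le> c q"
      using assms(1) by (simp add: amp_invariant_def)
    ultimately show ?thesis by linarith
  next
    case False
    then show ?thesis using assms by (simp add: amp_invariant_def sweep_avg_above)
  qed
  with assms show ?thesis by (simp add: amp_invariant_def antimono_sweep_avg sweep_avg_above)
qed

lemma amp_invariant_avg_adjacent:
  assumes "amp_invariant n p c" and "p < n"
  shows "amp_invariant n (Suc p) (avg_adjacent p c)"
proof -
  have "antimono (avg_adjacent p c)"
    using assms(1) by (simp add: amp_invariant_def antimono_avg_adjacent)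
  with assms show ?thesis by (auto simp: amp_invariant_def avg_adjacent_def)
qed

lemma amp_invariant_step:
  assumes "amp_invariant (length z) p c"
  shows "amp_invariant (length z) (match_step z a p) (amp_step z a c)"
proof -
  have "amp_step z a c =
      sweep avg_adjacent z a p (if p < length z \<and> z ! p = a then avg_adjacent p c else c)"
    using assms by (simp add: amp_invariant_def amp_step_eq_sweep)
  with assms show ?thesis
    by (auto simp: match_step_def intro: amp_invariant_sweep_avg amp_invariant_avg_adjacent)
qed

lemma amp_invariant_fold:
  "amp_invariant (length z) p c \<Longrightarrow>
    amp_invariant (length z) (fold (match_step z) x p) (fold (amp_step z) x c)"
  by (induction x arbitrary: p c) (simp_all add: amp_invariant_step)

section \<open>The automaton\<close>

definition advance_axis :: "nat \<Rightarrow> nat \<Rightarrow> nat \<Rightarrow> real" where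
  "advance_axis n k t =
    (if t = k then 1/2 else if t = Suc k then -1/2
     else if t = n + 1 + k then - (1 / sqrt 2) else 0)"

definition accept_axis :: "nat \<Rightarrow> nat \<Rightarrow> real" where
  "accept_axis n t = (if t = n then 1 / sqrt 2 else if t = 2 * n + 1 then - (1 / sqrt 2) else 0)"

definition symbol_op :: "'a list \<Rightarrow> 'a option \<Rightarrow> (nat \<Rightarrow> complex) \<Rightarrow> nat \<Rightarrow> complex" where
  "symbol_op z s = (case s of
      Some a \<Rightarrow> sweep (\<lambda>k. householder (2 * length z + 2) (advance_axis (length z) k)) z a (length z)
    | None \<Rightarrow> householder (2 * length z + 2) (accept_axis (length z)))"

definition subseq_qfa :: "'a list \<Rightarrow> 'a mmqfa" where
  "subseq_qfa z = \<lparr>qdim = 2 * length z + 2, trans = (\<lambda>s i j. symbol_op z s (basis_vec j) i),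
     qinit = 0, qacc = {2 * length z + 1}, qrej = {length z <.. 2 * length z}\<rparr>"

lemma advance_axis_norm: "k < n \<Longrightarrow> (\<Sum>t<2 * n + 2. (advance_axis n k t)\<^sup>2) = 1"
  by (subst sum_lessThan_support[of "{k, Suc k, n + 1 + k}"])
    (auto simp: advance_axis_def power_divide)

lemma accept_axis_norm: "(\<Sum>t<2 * n + 2. (accept_axis n t)\<^sup>2) = 1"
  by (subst sum_lessThan_support[of "{n, 2 * n + 1}"]) (auto simp: accept_axis_def power_divide)

lemma cinner_symbol_op:
  "cinner (2 * length z + 2) (symbol_op z s u) (symbol_op z s v) = cinner (2 * length z + 2) u v"
proof (cases s)
  case None
  then show ?thesis
    using cinner_householder[OF accept_axis_norm[of "length z"]] by (simp add: symbol_op_def)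
next
  case (Some a)
  let ?m = "2 * length z + 2"
  have "\<forall>u v. cinner ?m (symbol_op z s u) (symbol_op z s v) = cinner ?m u v"
    unfolding symbol_op_def Some option.case
    by (rule sweep_closed[where Q = "\<lambda>A. \<forall>u v. cinner ?m (A u) (A v) = cinner ?m u v"])
      (simp, simp, use cinner_householder[OF advance_axis_norm] in blast)
  then show ?thesis by blast
qed

lemma matrix_op_symbol_op: "matrix_op (2 * length z + 2) (symbol_op z s)"
proof (cases s)
  case None
  then show ?thesis by (simp add: symbol_op_def matrix_op_householder)
next
  case (Some a)
  show ?thesis
    unfolding symbol_op_def Some option.case
    by (rule sweep_closed[where Q = "matrix_op (2 * length z + 2)"])
      (rule matrix_op_id, erule (1) matrix_op_comp, rule matrix_op_householder)
qed

lemma is_mmqfa_subseq_qfa: "is_mmqfa Sig (subseq_qfa z)"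
proof -
  have "unitary_on (qdim (subseq_qfa z)) (trans (subseq_qfa z) s)" for s
    unfolding subseq_qfa_def mmqfa.select_convs
    by (rule unitary_on_if_cinner_preserving[OF cinner_symbol_op])
  then show ?thesis by (auto simp: is_mmqfa_def subseq_qfa_def)
qed

lemma apply_op_subseq_qfa:
  "apply_op (subseq_qfa z) s \<psi> = (\<lambda>i. if i < 2 * length z + 2 then symbol_op z s \<psi> i else 0)"
proof -
  have "i < 2 * length z + 2 \<Longrightarrow>
      (\<Sum>j<2 * length z + 2. symbol_op z s (basis_vec j) i * \<psi> j) = symbol_op z s \<psi> i" for i
    using matrix_op_symbol_op[of z s] unfolding matrix_op_def by metis
  then show ?thesis
    unfolding apply_op_def subseq_qfa_def mmqfa.select_convs by (intro ext if_cong) blast+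
qed

lemma householder_advance_axis:
  fixes \<psi> :: "nat \<Rightarrow> complex"
  assumes "k < n" and "\<psi> (n + 1 + k) = 0" and "t \<le> n"
  shows "householder (2 * n + 2) (advance_axis n k) \<psi> t = avg_adjacent k \<psi> t"
proof -
  have "(\<Sum>j<2 * n + 2. of_real (advance_axis n k j) * \<psi> j)
      = (\<Sum>j\<in>{k, Suc k, n + 1 + k}. of_real (advance_axis n k j) * \<psi> j)"
    by (rule sum_lessThan_support) (use assms in \<open>auto simp: advance_axis_def\<close>)
  also have "\<dots> = \<psi> k / 2 - \<psi> (Suc k) / 2"
    using assms by (simp add: advance_axis_def field_simps)
  finally show ?thesis
    using assms by (auto simp: householder_def avg_adjacent_def advance_axis_def field_simps)
qed

lemma sweep_householder_tracking:
  "K \<le> n \<Longrightarrow> (\<forall>j<K. \<psi> (n + 1 + j) = 0) \<Longrightarrow> t \<le> n \<Longrightarrow>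
    sweep (\<lambda>k. householder (2 * n + 2) (advance_axis n k)) z a K \<psi> t = sweep avg_adjacent z a K \<psi> t"
proof (induction K arbitrary: \<psi> t)
  case (Suc K)
  let ?H = "if z ! K = a then householder (2 * n + 2) (advance_axis n K) else id"
  let ?A = "if z ! K = a then avg_adjacent K \<psi> else \<psi>"
  have "\<forall>j<K. ?H \<psi> (n + 1 + j) = 0"
    using Suc.prems by (auto simp: householder_off_axis advance_axis_def)
  then have "sweep (\<lambda>k. householder (2 * n + 2) (advance_axis n k)) z a K (?H \<psi>) t
      = sweep avg_adjacent z a K (?H \<psi>) t"
    using Suc by simp
  also have "\<dots> = sweep avg_adjacent z a K ?A t"
    by (rule sweep_avg_cong[of K n]) (use Suc.prems householder_advance_axis in auto)
  finally show ?case by (cases "z ! K = a") simp_all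
qed simp

lemma symbol_op_Some_accept_coord:
  "symbol_op z (Some a) \<psi> (2 * length z + 1) = \<psi> (2 * length z + 1)"
  unfolding symbol_op_def option.case
  by (rule sweep_invariant[where P = "\<lambda>\<phi>. \<phi> (2 * length z + 1) = \<psi> (2 * length z + 1)"])
    (auto simp: householder_off_axis advance_axis_def)

lemma symbol_op_Some_tracking:
  assumes "\<forall>t>length z. c t = 0" and "t \<le> length z"
  shows "symbol_op z (Some a) (\<lambda>t. of_real (c t)) t = of_real (amp_step z a c t)"
proof -
  have "symbol_op z (Some a) (\<lambda>t. of_real (c t)) t
      = sweep avg_adjacent z a (length z) (\<lambda>t. of_real (c t)) t"
    unfolding symbol_op_def option.case
    by (rule sweep_householder_tracking) (use assms in simp_all)
  also have "sweep avg_adjacent z a (length z) (\<lambda>t. complex_of_real (c t))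
      = (\<lambda>t. of_real (amp_step z a c t))"
    unfolding amp_step_def
    by (rule sweep_commute[where g = "\<lambda>h t. complex_of_real (h t)" and x = c, symmetric])
      (auto simp: avg_adjacent_def fun_eq_iff)
  finally show ?thesis by simp
qed

lemma proj_non_subseq_qfa: "proj_non (subseq_qfa z) \<psi> = (\<lambda>i. if i \<le> length z then \<psi> i else 0)"
  by (auto simp: proj_non_def subseq_qfa_def fun_eq_iff)

lemma sqnorm_accept_subseq_qfa:
  "sqnorm_on (subseq_qfa z) (qacc (subseq_qfa z)) \<psi> = (cmod (\<psi> (2 * length z + 1)))\<^sup>2"
proof -
  have "qacc (subseq_qfa z) \<inter> {..<qdim (subseq_qfa z)} = {2 * length z + 1}"
    by (auto simp: subseq_qfa_def)
  then show ?thesis by (simp add: sqnorm_on_def)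
qed

lemma step_Some_subseq_qfa:
  assumes "\<forall>t>length z. c t = 0"
  shows "\<exists>r. step (subseq_qfa z) (Some a) (\<lambda>t. of_real (c t), pa, pr)
    = (\<lambda>t. of_real (amp_step z a c t), pa, r)"
proof -
  let ?\<psi> = "apply_op (subseq_qfa z) (Some a) (\<lambda>t. of_real (c t))"
  have "proj_non (subseq_qfa z) ?\<psi> = (\<lambda>t. of_real (amp_step z a c t))"
    using assms amp_step_support[OF assms]
    by (auto simp: proj_non_subseq_qfa apply_op_subseq_qfa symbol_op_Some_tracking fun_eq_iff)
  moreover have "?\<psi> (2 * length z + 1) = 0"
    using assms symbol_op_Some_accept_coord[of z a] by (simp add: apply_op_subseq_qfa)
  ultimately show ?thesis by (simp add: step_def sqnorm_accept_subseq_qfa)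
qed

lemma fold_step_Some_subseq_qfa:
  "\<forall>t>length z. c t = 0 \<Longrightarrow>
    \<exists>r. fold (step (subseq_qfa z)) (map Some x) (\<lambda>t. of_real (c t), pa, pr)
      = (\<lambda>t. of_real (fold (amp_step z) x c t), pa, r)"
proof (induction x arbitrary: c pr)
  case (Cons a x)
  obtain r where "step (subseq_qfa z) (Some a) (\<lambda>t. of_real (c t), pa, pr)
      = (\<lambda>t. of_real (amp_step z a c t), pa, r)"
    using step_Some_subseq_qfa[OF Cons.prems] by blast
  with Cons.IH[OF amp_step_support[OF Cons.prems]] show ?case by simp
qed simp

lemma step_None_accept_subseq_qfa:
  assumes "\<forall>t>length z. c t = 0"
  shows "fst (snd (step (subseq_qfa z) None (\<lambda>t. of_real (c t), pa, pr))) = pa + (c (length z))\<^sup>2"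
proof -
  let ?n = "length z"
  have "(\<Sum>t<2 * ?n + 2. of_real (accept_axis ?n t) * complex_of_real (c t))
      = (\<Sum>t\<in>{?n, 2 * ?n + 1}. of_real (accept_axis ?n t) * of_real (c t))"
    by (rule sum_lessThan_support) (auto simp: accept_axis_def)
  also have "\<dots> = of_real (1 / sqrt 2 * c ?n)"
    using assms by (simp add: accept_axis_def)
  finally have "apply_op (subseq_qfa z) None (\<lambda>t. of_real (c t)) (2 * ?n + 1)
      = of_real (2 * (1 / sqrt 2 * c ?n) * (1 / sqrt 2))"
    using assms by (simp add: apply_op_subseq_qfa symbol_op_def householder_def accept_axis_def
      flip: of_real_mult)
  also have "2 * (1 / sqrt 2 * c ?n) * (1 / sqrt 2) = c ?n"
    by (simp add: field_simps)
  finally show ?thesis by (simp add: step_def Let_def sqnorm_accept_subseq_qfa)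
qed

definition amp_init :: "nat \<Rightarrow> real" where
  "amp_init t = (if t = 0 then 1 else 0)"

lemma run_subseq_qfa:
  "\<exists>r. run (subseq_qfa z) (map Some x) = (\<lambda>t. of_real (fold (amp_step z) x amp_init t), 0, r)"
proof -
  have "init_state (subseq_qfa z) = (\<lambda>t. of_real (amp_init t), 0, 0)"
    by (auto simp: init_state_def subseq_qfa_def amp_init_def)
  then show ?thesis
    unfolding run_def using fold_step_Some_subseq_qfa[of z amp_init] by (simp add: amp_init_def)
qed

lemma fold_amp_step_init_support: "\<forall>t>length z. fold (amp_step z) x amp_init t = 0"
proof (induction x rule: rev_induct)
  case (snoc a x)
  then show ?case by (simp add: amp_step_support)
qed (simp add: amp_init_def)

lemma acc_prob_subseq_qfa: "acc_prob (subseq_qfa z) x = (fold (amp_step z) x amp_init (length z))\<^sup>2"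
proof -
  obtain r where
    "run (subseq_qfa z) (map Some x) = (\<lambda>t. of_real (fold (amp_step z) x amp_init t), 0, r)"
    using run_subseq_qfa by blast
  then show ?thesis
    using step_None_accept_subseq_qfa[OF fold_amp_step_init_support[of z x], of 0 r]
    by (simp add: acc_prob_def run_def)
qed

lemma end_decisive_subseq_qfa: "end_decisive Sig (subseq_qfa z)"
  unfolding end_decisive_def
proof (intro ballI allI impI)
  fix x k i assume "i \<in> qacc (subseq_qfa z)"
  then have "i = 2 * length z + 1" by (simp add: subseq_qfa_def)
  moreover obtain r where
    "run (subseq_qfa z) (map Some (take k x))
      = (\<lambda>t. of_real (fold (amp_step z) (take k x) amp_init t), 0, r)"
    using run_subseq_qfa by blast
  ultimately show
    "apply_op (subseq_qfa z) (Some (x ! k)) (fst (run (subseq_qfa z) (map Some (take k x)))) i = 0"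
    using fold_amp_step_init_support[of z "take k x"] symbol_op_Some_accept_coord[of z "x ! k"]
    by (simp add: apply_op_subseq_qfa)
qed

lemma amp_invariant_fold_init:
  "amp_invariant (length z) (fold (match_step z) x 0) (fold (amp_step z) x amp_init)"
  by (rule amp_invariant_fold) (auto simp: amp_invariant_def amp_init_def intro: antimonoI)

lemma acc_prob_subseq_qfa_ge:
  assumes "subseq z x" shows "(1/4) ^ length z \<le> acc_prob (subseq_qfa z) x"
proof -
  from assms have "fold (match_step z) x 0 = length z"
    using fold_match_step_eq_length_iff[of 0 z x] by simp
  then have "(1/2) ^ length z \<le> fold (amp_step z) x amp_init (length z)"
    using amp_invariant_fold_init[of z x] by (simp add: amp_invariant_def)
  then have "((1/2) ^ length z)\<^sup>2 \<le> acc_prob (subseq_qfa z) x"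
    unfolding acc_prob_subseq_qfa by (rule power_mono) simp
  then show ?thesis by (simp add: power_mult_distrib[symmetric] power2_eq_square)
qed

lemma acc_prob_subseq_qfa_eq_0:
  assumes "\<not> subseq z x" shows "acc_prob (subseq_qfa z) x = 0"
proof -
  from assms have "fold (match_step z) x 0 < length z"
    using fold_match_step_eq_length_iff[of 0 z x] amp_invariant_fold_init[of z x]
    by (simp add: amp_invariant_def)
  then show ?thesis
    using amp_invariant_fold_init[of z x] by (simp add: amp_invariant_def acc_prob_subseq_qfa)
qed

theorem theorem4p7:
  fixes Sig :: "'a set" and z :: "'a list"
  assumes "finite Sig" and "set z \<subseteq> Sig"
  shows "\<exists>M :: 'a mmqfa. is_mmqfa Sig M \<and> end_decisive Sig M \<and>
           accepts_bounded_pos_one_sided Sig M (subword_lang Sig z)"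
proof (intro exI conjI)
  show "is_mmqfa Sig (subseq_qfa z)" by (rule is_mmqfa_subseq_qfa)
  show "end_decisive Sig (subseq_qfa z)" by (rule end_decisive_subseq_qfa)
  have "(1/4) ^ length z / 2 < acc_prob (subseq_qfa z) x" if "subseq z x" for x
    using acc_prob_subseq_qfa_ge[OF that] zero_less_power[of "1/4 :: real" "length z"] by linarith
  then show "accepts_bounded_pos_one_sided Sig (subseq_qfa z) (subword_lang Sig z)"
    unfolding accepts_bounded_pos_one_sided_def subword_lang_iff[OF assms(2)]
    by (intro exI[of _ "(1/4) ^ length z / 2"]) (auto simp: acc_prob_subseq_qfa_eq_0)
qed

end
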